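(* Let $X$ be a complex Banach space with $\dim X\geq2$, let $\mathcal{A}\subseteq\mathcal{B}(X)$ be a standard operator algebra, let $r,s$ be nonnegative integers with $r+s\geq1$, and let $A\in\mathcal{A}$ be nonzero. The following are equivalent: (1) $A$ has rank one; (2) for every $B\in\mathcal{A}$, $\sigma_\pi(B^rAB^s)$ is a singleton; (3) for every $B\in\mathcal{A}$ with $\operatorname{rank}(B)\leq2$, $\sigma_\pi(B^rAB^s)$ is a singleton.
   Context: A standard operator algebra on a complex Banach space $X$ is a subalgebra of $\mathcal{B}(X)$ containing all finite rank operators; it need not be closed or unital. The peripheral spectrum of $T\in\mathcal{B}(X)$ is $\sigma_\pi(T)=\{z\in\sigma(T):|z|=r(T)\}$, where $\sigma(T)$ is the spectrum and $r(T)$ the spectral radius. *)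

theory Defs
  imports "HOL-Analysis.Analysis"
begin

class complex_banach = banach +
  fixes scaleC :: "complex \<Rightarrow> 'a \<Rightarrow> 'a"
  assumes scaleC_of_real: "scaleC (complex_of_real r) x = scaleR r x"
    and scaleC_add_right: "scaleC a (x + y) = scaleC a x + scaleC a y"
    and scaleC_add_left: "scaleC (a + b) x = scaleC a x + scaleC b x"
    and scaleC_scaleC: "scaleC a (scaleC b x) = scaleC (a * b) x"
    and norm_scaleC: "norm (scaleC a x) = cmod a * norm x"

definition clinear :: "('a::complex_banach \<Rightarrow> 'b::complex_banach) \<Rightarrow> bool" where
  "clinear f \<longleftrightarrow> (\<forall>x y. f (x + y) = f x + f y) \<and> (\<forall>c x. f (scaleC c x) = scaleC c (f x))"

definition bounded_clinear :: "('a::complex_banach \<Rightarrow> 'b::complex_banach) \<Rightarrow> bool" where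
  "bounded_clinear f \<longleftrightarrow> clinear f \<and> (\<exists>K. \<forall>x. norm (f x) \<le> norm x * K)"

definition cspan :: "'a::complex_banach set \<Rightarrow> 'a set" where
  "cspan S = {x. \<exists>F c. finite F \<and> F \<subseteq> S \<and> x = (\<Sum>v\<in>F. scaleC (c v) v)}"

definition rank_le :: "('a::complex_banach \<Rightarrow> 'a) \<Rightarrow> nat \<Rightarrow> bool" where
  "rank_le T n \<longleftrightarrow> (\<exists>F. finite F \<and> card F \<le> n \<and> range T \<subseteq> cspan F)"

definition rank_one :: "('a::complex_banach \<Rightarrow> 'a) \<Rightarrow> bool" where
  "rank_one T \<longleftrightarrow> rank_le T 1 \<and> \<not> rank_le T 0"

definition finite_rank :: "('a::complex_banach \<Rightarrow> 'a) \<Rightarrow> bool" where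
  "finite_rank T \<longleftrightarrow> (\<exists>n. rank_le T n)"

definition cdim_ge2 :: "'a::complex_banach itself \<Rightarrow> bool" where
  "cdim_ge2 _ \<longleftrightarrow> \<not> (\<exists>F::'a set. finite F \<and> card F \<le> 1 \<and> UNIV \<subseteq> cspan F)"

definition invertible_op :: "('a::complex_banach \<Rightarrow> 'a) \<Rightarrow> bool" where
  "invertible_op T \<longleftrightarrow> (\<exists>S. bounded_clinear S \<and> S \<circ> T = id \<and> T \<circ> S = id)"

definition op_spectrum :: "('a::complex_banach \<Rightarrow> 'a) \<Rightarrow> complex set" where
  "op_spectrum T = {z. \<not> invertible_op (\<lambda>x. T x - scaleC z x)}"

definition spectral_radius :: "('a::complex_banach \<Rightarrow> 'a) \<Rightarrow> real" where
  "spectral_radius T = Sup (cmod ` op_spectrum T)"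

definition peripheral_spectrum :: "('a::complex_banach \<Rightarrow> 'a) \<Rightarrow> complex set" where
  "peripheral_spectrum T = {z \<in> op_spectrum T. cmod z = spectral_radius T}"

definition standard_operator_algebra :: "('a::complex_banach \<Rightarrow> 'a) set \<Rightarrow> bool" where
  "standard_operator_algebra \<A> \<longleftrightarrow>
     (\<forall>T\<in>\<A>. bounded_clinear T) \<and>
     (\<forall>S\<in>\<A>. \<forall>T\<in>\<A>. (\<lambda>x. S x + T x) \<in> \<A>) \<and>
     (\<forall>c. \<forall>T\<in>\<A>. (\<lambda>x. scaleC c (T x)) \<in> \<A>) \<and>
     (\<forall>S\<in>\<A>. \<forall>T\<in>\<A>. S \<circ> T \<in> \<A>) \<and>
     (\<forall>T. bounded_clinear T \<and> finite_rank T \<longrightarrow> T \<in> \<A>)"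

end

theory Submission
  imports Defs
begin

text \<open>
  If A has rank one, then every product T = B^r A B^s has rank at most one, so T(T x) = \<lambda> T x
  for some \<lambda>; the resolvent of T is then an explicit polynomial in T, the spectrum lies in
  {0, \<lambda>}, and the peripheral spectrum is a single point.

  If A has rank at least two, Hahn-Banach gives vectors e1, e2 and biorthogonal functionals
  g1, g2 for which the compression M = (gi(A ej)) is invertible and its diagonal entries are
  both zero or both nonzero. For B x = \<alpha> g1(x) e1 + \<beta> g2(x) e2, with \<alpha>^(r+s) and \<beta>^(r+s)
  chosen to make the trace of the relevant 2x2 matrix vanish, B^r A B^s acts on a
  two-dimensional invariant subspace containing its range by a traceless invertible matrix.
  Its eigenvalues m and -m both lie on the spectral circle, so the peripheral spectrum has
  two points.
\<close>

lemma scaleC_zero_right [simp]: "scaleC a (0::'a::complex_banach) = 0"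
proof -
  have "scaleC a (0::'a) = scaleC a 0 + scaleC a 0" by (metis add_0 scaleC_add_right)
  then show ?thesis by simp
qed

lemma scaleC_minus_right: "scaleC a (- (x::'a::complex_banach)) = - scaleC a x"
  by (metis add.right_inverse add_eq_0_iff scaleC_add_right scaleC_zero_right)

lemma scaleC_zero_left [simp]: "scaleC 0 (x::'a::complex_banach) = 0"
  by (metis of_real_0 scaleC_of_real scaleR_zero_left)

lemma scaleC_one [simp]: "scaleC 1 (x::'a::complex_banach) = x"
  by (metis of_real_1 scaleC_of_real scaleR_one)

lemma scaleC_minus_left: "scaleC (- a) (x::'a::complex_banach) = - scaleC a x"
  by (metis add.right_inverse add_eq_0_iff scaleC_add_left scaleC_zero_left)

lemma scaleC_diff_left: "scaleC (a - b) (x::'a::complex_banach) = scaleC a x - scaleC b x"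
  by (metis diff_conv_add_uminus scaleC_add_left scaleC_minus_left)

lemma scaleC_eq_0_iff: "scaleC a (x::'a::complex_banach) = 0 \<longleftrightarrow> a = 0 \<or> x = 0"
  by (metis mult_eq_0_iff norm_eq_zero norm_scaleC scaleC_zero_left scaleC_zero_right)

lemma scaleC_scaleR: "scaleC a (scaleR r (x::'a::complex_banach)) = scaleR r (scaleC a x)"
  by (metis mult.commute scaleC_of_real scaleC_scaleC)

lemma scaleC_Complex:
  "scaleC (Complex a b) (x::'a::complex_banach) = a *\<^sub>R x + b *\<^sub>R scaleC \<i> x"
proof -
  have "Complex a b = complex_of_real a + \<i> * complex_of_real b" by (simp add: complex_eq_iff)
  then show ?thesis
    by (simp add: scaleC_add_left scaleC_of_real flip: scaleC_scaleC) (simp add: scaleC_scaleR)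
qed

definition lincomb2 :: "complex \<Rightarrow> complex \<Rightarrow> 'a::complex_banach \<Rightarrow> 'a \<Rightarrow> 'a" where
  "lincomb2 a b u v = scaleC a u + scaleC b v"

definition lincomb3 ::
    "complex \<Rightarrow> complex \<Rightarrow> complex \<Rightarrow> 'a::complex_banach \<Rightarrow> 'a \<Rightarrow> 'a \<Rightarrow> 'a" where
  "lincomb3 a b c u v w = scaleC a u + scaleC b v + scaleC c w"

lemma lincomb2_10 [simp]: "lincomb2 1 0 u v = u"
  by (simp add: lincomb2_def)

lemma lincomb3_100 [simp]: "lincomb3 1 0 0 u v w = u"
  by (simp add: lincomb3_def)

lemma lincomb2_lincomb2:
  "lincomb2 a b (lincomb2 p1 q1 u v) (lincomb2 p2 q2 u v)
   = lincomb2 (a*p1 + b*p2) (a*q1 + b*q2) u v"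
  unfolding lincomb2_def by (simp add: scaleC_add_right scaleC_scaleC scaleC_add_left add_ac)

lemma lincomb3_lincomb3:
  "lincomb3 a b c (lincomb3 p1 q1 r1 u v w) (lincomb3 p2 q2 r2 u v w) (lincomb3 p3 q3 r3 u v w)
   = lincomb3 (a*p1 + b*p2 + c*p3) (a*q1 + b*q2 + c*q3) (a*r1 + b*r2 + c*r3) u v w"
  unfolding lincomb3_def by (simp add: scaleC_add_right scaleC_scaleC scaleC_add_left add_ac)

lemma lincomb2_diff_scaleC:
  "lincomb2 a b u v - scaleC z (lincomb2 a' b' u v) = lincomb2 (a - z*a') (b - z*b') u v"
  by (simp add: lincomb2_def scaleC_add_right scaleC_diff_left scaleC_scaleC algebra_simps)

lemma lincomb3_diff_scaleC:
  "lincomb3 a b c u v w - scaleC z (lincomb3 a' b' c' u v w)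
   = lincomb3 (a - z*a') (b - z*b') (c - z*c') u v w"
  by (simp add: lincomb3_def scaleC_add_right scaleC_diff_left scaleC_scaleC algebra_simps)

lemma scaleC_lincomb2: "scaleC k (lincomb2 a b u v) = lincomb2 (k*a) (k*b) u v"
  by (simp add: lincomb2_def scaleC_add_right scaleC_scaleC)

section \<open>Hahn-Banach\<close>

text \<open>Partial linear functionals, defined on a subspace, are represented by their graphs
  G \<subseteq> X \<times> \<real>, to which Zorn's lemma applies directly.\<close>

definition norm_dominated_graph :: "'a::real_normed_vector \<Rightarrow> ('a \<times> real) set \<Rightarrow> bool" where
  "norm_dominated_graph w G \<longleftrightarrow> (0,0) \<in> G \<and>
     (\<forall>x a y b. (x,a) \<in> G \<longrightarrow> (y,b) \<in> G \<longrightarrow> (x+y, a+b) \<in> G) \<and>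
     (\<forall>x a r. (x,a) \<in> G \<longrightarrow> (r *\<^sub>R x, r*a) \<in> G) \<and>
     (\<forall>a. (0,a) \<in> G \<longrightarrow> a = 0) \<and>
     (\<forall>x a. (x,a) \<in> G \<longrightarrow> a \<le> norm x) \<and> (w, norm w) \<in> G"

lemma norm_dominated_graph_line:
  assumes "w \<noteq> 0"
  shows "norm_dominated_graph w {(t *\<^sub>R w, t * norm w) | t. True}"
    (is "norm_dominated_graph w ?L")
  unfolding norm_dominated_graph_def
proof (intro conjI allI impI)
  show "(0,0) \<in> ?L" by (rule CollectI, rule exI[of _ 0]) simp
  show "(w, norm w) \<in> ?L" by (rule CollectI, rule exI[of _ 1]) simp
next
  fix x a y b assume "(x,a) \<in> ?L" "(y,b) \<in> ?L"
  then obtain t s where "x = t *\<^sub>R w" "a = t * norm w" "y = s *\<^sub>R w" "b = s * norm w" by blast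
  then show "(x+y, a+b) \<in> ?L"
    by (intro CollectI exI[of _ "t+s"]) (simp add: algebra_simps)
next
  fix x a r assume "(x,a) \<in> ?L"
  then obtain t where "x = t *\<^sub>R w" "a = t * norm w" by blast
  then show "(r *\<^sub>R x, r*a) \<in> ?L"
    by (intro CollectI exI[of _ "r*t"]) (simp add: algebra_simps)
next
  fix a assume "(0,a) \<in> ?L"
  then obtain t where "0 = t *\<^sub>R w" "a = t * norm w" by blast
  then show "a = 0" using assms by simp
next
  fix x a assume "(x,a) \<in> ?L"
  then obtain t where "x = t *\<^sub>R w" "a = t * norm w" by blast
  then show "a \<le> norm x" by (simp add: mult_right_mono)
qed

lemma norm_dominated_graph_Union_chain:
  assumes "C \<in> chains {G. norm_dominated_graph w G}" "C \<noteq> {}"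
  shows "norm_dominated_graph w (\<Union>C)"
proof -
  have sub: "C \<subseteq> {G. norm_dominated_graph w G}"
    and chain: "\<And>X Y. X \<in> C \<Longrightarrow> Y \<in> C \<Longrightarrow> X \<subseteq> Y \<or> Y \<subseteq> X"
    using assms(1) unfolding chains_def chain_subset_def by auto
  show ?thesis
    unfolding norm_dominated_graph_def
  proof (intro conjI allI impI)
    show "(0,0) \<in> \<Union>C" "(w, norm w) \<in> \<Union>C"
      using assms(2) sub unfolding norm_dominated_graph_def by blast+
  next
    fix x a y b assume "(x,a) \<in> \<Union>C" "(y,b) \<in> \<Union>C"
    then obtain X Y where XY: "X \<in> C" "Y \<in> C" "(x,a) \<in> X" "(y,b) \<in> Y" by blast
    then obtain Z where "Z \<in> C" "(x,a) \<in> Z" "(y,b) \<in> Z" using chain by blast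
    moreover from \<open>Z \<in> C\<close> have "norm_dominated_graph w Z" using sub by blast
    ultimately show "(x+y, a+b) \<in> \<Union>C" unfolding norm_dominated_graph_def by blast
  next
    fix x a r assume "(x,a) \<in> \<Union>C"
    then show "(r *\<^sub>R x, r*a) \<in> \<Union>C" using sub unfolding norm_dominated_graph_def by blast
  next
    fix a assume "(0,a) \<in> \<Union>C"
    then show "a = 0" using sub unfolding norm_dominated_graph_def by blast
  next
    fix x a assume "(x,a) \<in> \<Union>C"
    then show "a \<le> norm x" using sub unfolding norm_dominated_graph_def by blast
  qed
qed

lemma maximal_norm_dominated_graph_exists:
  assumes "w \<noteq> 0"
  shows "\<exists>M\<in>{G. norm_dominated_graph w G}.
           \<forall>X\<in>{G. norm_dominated_graph w G}. M \<subseteq> X \<longrightarrow> X = M"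
proof (rule Zorn_Lemma2, intro ballI)
  fix C assume "C \<in> chains {G. norm_dominated_graph w G}"
  then show "\<exists>U\<in>{G. norm_dominated_graph w G}. \<forall>X\<in>C. X \<subseteq> U"
    using norm_dominated_graph_line[OF assms] norm_dominated_graph_Union_chain
    by (cases "C = {}") blast+
qed

lemma norm_dominated_graph_single_valued:
  assumes "norm_dominated_graph w G" "(x,a) \<in> G" "(x,b) \<in> G"
  shows "a = b"
proof -
  have "(-1 *\<^sub>R x, -1 * b) \<in> G" using assms unfolding norm_dominated_graph_def by blast
  then have "(x + -1 *\<^sub>R x, a + -1 * b) \<in> G" using assms unfolding norm_dominated_graph_def by blast
  then have "(0, a - b) \<in> G" by simp
  then show ?thesis using assms unfolding norm_dominated_graph_def by auto
qed

text \<open>The one-step extension: c is squeezed between a - \<parallel>x - v\<parallel> and \<parallel>z + v\<parallel> - b, which is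
  possible because a + b \<le> \<parallel>x + z\<parallel> for all (x,a), (z,b) in the graph.\<close>

lemma norm_dominated_graph_extension_value:
  assumes "norm_dominated_graph w M"
  obtains c where "\<And>x a t. (x,a) \<in> M \<Longrightarrow> a + t * c \<le> norm (x + t *\<^sub>R v)"
proof -
  from assms have M0: "(0,0) \<in> M"
    and Madd: "\<And>x a y b. (x,a) \<in> M \<Longrightarrow> (y,b) \<in> M \<Longrightarrow> (x+y, a+b) \<in> M"
    and Msc: "\<And>x a r. (x,a) \<in> M \<Longrightarrow> (r *\<^sub>R x, r*a) \<in> M"
    and Mdom: "\<And>x a. (x,a) \<in> M \<Longrightarrow> a \<le> norm x"
    unfolding norm_dominated_graph_def by blast+
  define S where "S = {a - norm (x - v) | x a. (x,a) \<in> M}"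
  define c where "c = Sup S"
  have sep: "a - norm (x - v) \<le> norm (z + v) - b" if "(x,a) \<in> M" "(z,b) \<in> M" for x a z b
  proof -
    have "a + b \<le> norm (x + z)" using Mdom[OF Madd[OF that]] .
    also have "x + z = (x - v) + (z + v)" by simp
    also have "norm \<dots> \<le> norm (x - v) + norm (z + v)" by (rule norm_triangle_ineq)
    finally show ?thesis by simp
  qed
  have "S \<noteq> {}" using M0 unfolding S_def by blast
  moreover have "bdd_above S" unfolding S_def bdd_above_def using sep[OF _ M0] by auto
  ultimately have c_upper: "a - norm (x - v) \<le> c" and c_lower: "c \<le> norm (x + v) - a"
    if "(x,a) \<in> M" for x a
    unfolding c_def using that sep by (auto intro!: cSup_upper cSup_least simp: S_def)
  have "a + t * c \<le> norm (x + t *\<^sub>R v)" if xa: "(x,a) \<in> M" for x a t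
  proof (cases t "0::real" rule: linorder_cases)
    case less
    have "(1/(-t)) * a - norm ((1/(-t)) *\<^sub>R x - v) \<le> c" using c_upper[OF Msc[OF xa]] .
    then have "a + t * c \<le> (-t) * norm ((1/(-t)) *\<^sub>R x - v)"
      using less by (simp add: field_simps)
    also have "\<dots> = norm ((-t) *\<^sub>R ((1/(-t)) *\<^sub>R x - v))" using less by simp
    also have "(-t) *\<^sub>R ((1/(-t)) *\<^sub>R x - v) = x + t *\<^sub>R v"
      using less by (simp add: scaleR_diff_right)
    finally show ?thesis .
  next
    case equal
    then show ?thesis using Mdom[OF xa] by simp
  next
    case greater
    have "c \<le> norm ((1/t) *\<^sub>R x + v) - (1/t) * a" using c_lower[OF Msc[OF xa]] .
    then have "a + t * c \<le> t * norm ((1/t) *\<^sub>R x + v)"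
      using greater by (simp add: field_simps)
    also have "\<dots> = norm (t *\<^sub>R ((1/t) *\<^sub>R x + v))" using greater by simp
    also have "t *\<^sub>R ((1/t) *\<^sub>R x + v) = x + t *\<^sub>R v"
      using greater by (simp add: scaleR_add_right)
    finally show ?thesis .
  qed
  then show ?thesis using that by blast
qed

lemma norm_dominated_graph_extend:
  assumes ok: "norm_dominated_graph w M" and v: "\<not> (\<exists>a. (v,a) \<in> M)"
  shows "\<exists>M'. norm_dominated_graph w M' \<and> M \<subseteq> M' \<and> M' \<noteq> M"
proof -
  from ok have M0: "(0,0) \<in> M"
    and Madd: "\<And>x a y b. (x,a) \<in> M \<Longrightarrow> (y,b) \<in> M \<Longrightarrow> (x+y, a+b) \<in> M"
    and Msc: "\<And>x a r. (x,a) \<in> M \<Longrightarrow> (r *\<^sub>R x, r*a) \<in> M"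
    and Mfun: "\<And>a. (0,a) \<in> M \<Longrightarrow> a = 0"
    and Mw: "(w, norm w) \<in> M"
    unfolding norm_dominated_graph_def by blast+
  obtain c where dom: "\<And>x a t. (x,a) \<in> M \<Longrightarrow> a + t * c \<le> norm (x + t *\<^sub>R v)"
    using norm_dominated_graph_extension_value[OF ok] by blast
  define M' where "M' = {(x + t *\<^sub>R v, a + t * c) | x a t. (x,a) \<in> M}"
  have "norm_dominated_graph w M'" unfolding norm_dominated_graph_def
  proof (intro conjI allI impI)
    show "(0,0) \<in> M'" unfolding M'_def using M0 by force
    show "(w, norm w) \<in> M'" unfolding M'_def using Mw by force
  next
    fix x a y b assume "(x,a) \<in> M'" "(y,b) \<in> M'"
    then obtain x1 a1 t1 x2 a2 t2 where h: "(x1,a1) \<in> M" "(x2,a2) \<in> M"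
      "x = x1 + t1 *\<^sub>R v" "a = a1 + t1 * c" "y = x2 + t2 *\<^sub>R v" "b = a2 + t2 * c"
      unfolding M'_def by blast
    have "x + y = (x1 + x2) + (t1 + t2) *\<^sub>R v" "a + b = (a1 + a2) + (t1 + t2) * c"
      using h by (simp_all add: algebra_simps)
    then show "(x+y, a+b) \<in> M'" unfolding M'_def using Madd[OF h(1,2)] by blast
  next
    fix x a r assume "(x,a) \<in> M'"
    then obtain x1 a1 t1 where h: "(x1,a1) \<in> M" "x = x1 + t1 *\<^sub>R v" "a = a1 + t1 * c"
      unfolding M'_def by blast
    have "r *\<^sub>R x = r *\<^sub>R x1 + (r*t1) *\<^sub>R v" "r * a = r * a1 + (r * t1) * c"
      using h by (simp_all add: algebra_simps)
    then show "(r *\<^sub>R x, r*a) \<in> M'" unfolding M'_def using Msc[OF h(1)] by blast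
  next
    fix a assume "(0,a) \<in> M'"
    then obtain x1 a1 t1 where h: "(x1,a1) \<in> M" "0 = x1 + t1 *\<^sub>R v" "a = a1 + t1 * c"
      unfolding M'_def by blast
    show "a = 0"
    proof (cases "t1 = 0")
      case True
      then show ?thesis using h Mfun by simp
    next
      case False
      have "x1 = - (t1 *\<^sub>R v)" using h(2) by (simp add: eq_neg_iff_add_eq_0)
      then have "(-(1/t1)) *\<^sub>R x1 = v" using False by simp
      then have "(v, (-(1/t1)) * a1) \<in> M" using Msc[OF h(1)] by metis
      then show ?thesis using v by blast
    qed
  next
    fix x a assume "(x,a) \<in> M'"
    then show "a \<le> norm x" unfolding M'_def using dom by blast
  qed
  moreover have "M \<subseteq> M'"
  proof
    fix p assume "p \<in> M"
    then obtain x a where "p = (x,a)" "(x,a) \<in> M" by (cases p) auto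
    then show "p \<in> M'" unfolding M'_def by force
  qed
  moreover have "(v, c) \<in> M'"
  proof -
    have "(v, c) = (0 + 1 *\<^sub>R v, 0 + 1 * c)" by simp
    then show ?thesis unfolding M'_def using M0 by blast
  qed
  ultimately show ?thesis using v by blast
qed

lemma real_hahn_banach:
  fixes w :: "'a::real_normed_vector"
  assumes "w \<noteq> 0"
  shows "\<exists>f. (\<forall>x y. f (x + y) = f x + f y) \<and> (\<forall>r x. f (r *\<^sub>R x) = r * f x)
           \<and> (\<forall>x. \<bar>f x\<bar> \<le> norm x) \<and> f w = norm w"
proof -
  obtain M where ok: "norm_dominated_graph w M"
    and max: "\<And>X. norm_dominated_graph w X \<Longrightarrow> M \<subseteq> X \<Longrightarrow> X = M"
    using maximal_norm_dominated_graph_exists[OF assms] by blast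
  have total: "\<exists>a. (x,a) \<in> M" for x
    using norm_dominated_graph_extend[OF ok, of x] max by blast
  define f where "f x = (THE a. (x,a) \<in> M)" for x
  have graph: "(x, f x) \<in> M" for x
    unfolding f_def using total[of x] norm_dominated_graph_single_valued[OF ok] by (metis theI)
  have f_eq: "(x,a) \<in> M \<Longrightarrow> f x = a" for x a
    using norm_dominated_graph_single_valued[OF ok graph] by blast
  have Madd: "\<And>x a y b. (x,a) \<in> M \<Longrightarrow> (y,b) \<in> M \<Longrightarrow> (x+y, a+b) \<in> M"
    and Msc: "\<And>x a r. (x,a) \<in> M \<Longrightarrow> (r *\<^sub>R x, r*a) \<in> M"
    using ok unfolding norm_dominated_graph_def by blast+
  have add: "f (x + y) = f x + f y" for x y
    by (rule f_eq, rule Madd, rule graph, rule graph)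
  have scale: "f (r *\<^sub>R x) = r * f x" for r x
    by (rule f_eq, rule Msc, rule graph)
  have le: "f x \<le> norm x" for x using ok graph unfolding norm_dominated_graph_def by blast
  have "\<bar>f x\<bar> \<le> norm x" for x
  proof -
    have "f ((-1) *\<^sub>R x) \<le> norm ((-1) *\<^sub>R x)" by (rule le)
    then have "- f x \<le> norm x" by (simp only: scale norm_scaleR)
    then show ?thesis using le[of x] by linarith
  qed
  moreover have "f w = norm w" using ok f_eq unfolding norm_dominated_graph_def by blast
  ultimately show ?thesis using add scale by blast
qed

definition bounded_clinear_functional :: "('a::complex_banach \<Rightarrow> complex) \<Rightarrow> bool" where
  "bounded_clinear_functional g \<longleftrightarrow>
     (\<forall>x y. g (x + y) = g x + g y) \<and> (\<forall>c x. g (scaleC c x) = c * g x) \<and>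
     (\<exists>K. \<forall>x. cmod (g x) \<le> K * norm x)"

lemma complex_hahn_banach:
  fixes w :: "'a::complex_banach"
  assumes "w \<noteq> 0"
  shows "\<exists>g. bounded_clinear_functional g \<and> g w = 1"
proof -
  obtain f where f_add: "\<And>x y. f (x + y) = f x + f y" and f_scale: "\<And>r x. f (r *\<^sub>R x) = r * f x"
    and f_bound: "\<And>x. \<bar>f x\<bar> \<le> norm x" and f_w: "f w = norm w"
    using real_hahn_banach[OF assms] by blast
  define h where "h x = Complex (f x) (- f (scaleC \<i> x))" for x
  have ii: "scaleC \<i> (scaleC \<i> x) = - (x::'a)" for x
    by (simp add: scaleC_scaleC scaleC_minus_left)
  have f_minus: "f (- x) = - f x" for x using f_scale[of "-1" x] by simp
  have h_add: "h (x + y) = h x + h y" for x y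
    by (simp add: h_def f_add scaleC_add_right complex_eq_iff)
  have h_scaleR: "h (r *\<^sub>R x) = complex_of_real r * h x" for r x
    by (simp add: h_def f_scale scaleC_scaleR complex_eq_iff)
  have h_i: "h (scaleC \<i> x) = \<i> * h x" for x
    by (simp add: h_def ii f_minus complex_eq_iff)
  have h_scaleC: "h (scaleC c x) = c * h x" for c x
  proof -
    obtain a b where c: "c = Complex a b" by (cases c)
    have "h (scaleC c x) = complex_of_real a * h x + complex_of_real b * (\<i> * h x)"
      by (simp add: c scaleC_Complex h_add h_scaleR h_i)
    also have "\<dots> = c * h x" by (simp add: c complex_eq_iff)
    finally show ?thesis .
  qed
  have h_bound: "cmod (h x) \<le> 2 * norm x" for x
  proof -
    have "cmod (h x) \<le> \<bar>f x\<bar> + \<bar>f (scaleC \<i> x)\<bar>"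
      unfolding h_def using cmod_le[of "Complex (f x) (- f (scaleC \<i> x))"] by simp
    also have "\<dots> \<le> norm x + norm (scaleC \<i> x)" using f_bound by (intro add_mono) auto
    also have "norm (scaleC \<i> x) = norm x" by (simp add: norm_scaleC)
    finally show ?thesis by simp
  qed
  have h_w: "h w \<noteq> 0" using assms f_w by (simp add: h_def complex_eq_iff)
  have "bounded_clinear_functional (\<lambda>x. h x / h w)" unfolding bounded_clinear_functional_def
  proof (intro conjI allI exI)
    fix x y show "h (x + y) / h w = h x / h w + h y / h w"
      by (simp add: h_add add_divide_distrib)
  next
    fix c x show "h (scaleC c x) / h w = c * (h x / h w)" by (simp add: h_scaleC)
  next
    fix x show "cmod (h x / h w) \<le> (2 / cmod (h w)) * norm x"
      using h_bound[of x] h_w by (simp add: norm_divide divide_right_mono)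
  qed
  moreover have "h w / h w = 1" using h_w by simp
  ultimately show ?thesis by blast
qed

lemma bounded_clinear_functional_add:
  "bounded_clinear_functional g \<Longrightarrow> g (x + y) = g x + g y"
  unfolding bounded_clinear_functional_def by blast

lemma bounded_clinear_functional_scaleC:
  "bounded_clinear_functional g \<Longrightarrow> g (scaleC c x) = c * g x"
  unfolding bounded_clinear_functional_def by blast

lemma bounded_clinear_functional_zero:
  "bounded_clinear_functional g \<Longrightarrow> g 0 = 0"
  using bounded_clinear_functional_scaleC[of g 0 0] by simp

lemma bounded_clinear_functional_diff:
  assumes "bounded_clinear_functional g"
  shows "g (x - y) = g x - g y"
proof -
  have "g (- y) = - g y"
    using bounded_clinear_functional_scaleC[OF assms, of "-1" y] by (simp add: scaleC_minus_left)
  then show ?thesis by (metis assms bounded_clinear_functional_add diff_conv_add_uminus)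
qed

lemma bounded_clinear_functional_lincomb2:
  "bounded_clinear_functional g \<Longrightarrow> g (lincomb2 a b u v) = a * g u + b * g v"
  by (simp add: lincomb2_def bounded_clinear_functional_add bounded_clinear_functional_scaleC)

lemma bounded_clinear_functional_diff_scaled:
  assumes "bounded_clinear_functional g" "bounded_clinear_functional h"
  shows "bounded_clinear_functional (\<lambda>x. g x - k * h x)"
proof -
  obtain K1 where K1: "\<forall>x. cmod (g x) \<le> K1 * norm x"
    using assms(1) unfolding bounded_clinear_functional_def by blast
  obtain K2 where K2: "\<forall>x. cmod (h x) \<le> K2 * norm x"
    using assms(2) unfolding bounded_clinear_functional_def by blast
  have "cmod (g x - k * h x) \<le> (K1 + cmod k * K2) * norm x" for x
  proof -
    have "cmod (g x - k * h x) \<le> cmod (g x) + cmod k * cmod (h x)"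
      using norm_triangle_ineq4[of "g x" "k * h x"] by (simp add: norm_mult)
    also have "\<dots> \<le> K1 * norm x + cmod k * (K2 * norm x)"
      using K1 K2 by (intro add_mono mult_left_mono) auto
    finally show ?thesis by (simp add: algebra_simps)
  qed
  then have "\<exists>K. \<forall>x. cmod (g x - k * h x) \<le> K * norm x" by blast
  then show ?thesis
    using assms unfolding bounded_clinear_functional_def by (auto simp: algebra_simps)
qed

lemma bounded_clinear_functional_scaled:
  assumes "bounded_clinear_functional g"
  shows "bounded_clinear_functional (\<lambda>x. k * g x)"
proof -
  have "(\<lambda>x. g x - (1 - k) * g x) = (\<lambda>x. k * g x)" by (simp add: algebra_simps)
  then show ?thesis using bounded_clinear_functional_diff_scaled[OF assms assms] by metis
qed

definition cindependent :: "'a::complex_banach \<Rightarrow> 'a \<Rightarrow> bool" where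
  "cindependent u v \<longleftrightarrow> (\<forall>a b. lincomb2 a b u v = 0 \<longrightarrow> a = 0 \<and> b = 0)"

definition biorthogonal ::
    "('a::complex_banach \<Rightarrow> complex) \<Rightarrow> ('a \<Rightarrow> complex) \<Rightarrow> 'a \<Rightarrow> 'a \<Rightarrow> bool" where
  "biorthogonal g1 g2 e1 e2 \<longleftrightarrow>
     bounded_clinear_functional g1 \<and> bounded_clinear_functional g2 \<and>
     g1 e1 = 1 \<and> g2 e1 = 0 \<and> g1 e2 = 0 \<and> g2 e2 = 1"

lemma biorthogonal_exists:
  assumes "cindependent y1 y2"
  shows "\<exists>h1 h2. biorthogonal h1 h2 y1 y2"
proof -
  have "y1 \<noteq> 0"
    using assms unfolding cindependent_def lincomb2_def
    by (metis add_0 one_neq_zero scaleC_zero_left scaleC_zero_right)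
  then obtain h where h: "bounded_clinear_functional h" "h y1 = 1"
    using complex_hahn_banach by blast
  have "lincomb2 (- h y2) 1 y1 y2 \<noteq> 0" using assms unfolding cindependent_def by fastforce
  then obtain k where k: "bounded_clinear_functional k" "k (lincomb2 (- h y2) 1 y1 y2) = 1"
    using complex_hahn_banach by blast
  have k_y: "k y2 - h y2 * k y1 = 1"
    using k by (simp add: bounded_clinear_functional_lincomb2)
  define h2 where "h2 x = k x - k y1 * h x" for x
  define h1 where "h1 x = h x - h y2 * h2 x" for x
  have "bounded_clinear_functional h2"
    unfolding h2_def by (rule bounded_clinear_functional_diff_scaled[OF k(1) h(1)])
  moreover then have "bounded_clinear_functional h1"
    unfolding h1_def by (rule bounded_clinear_functional_diff_scaled[OF h(1)])
  moreover have "h2 y1 = 0" "h2 y2 = 1" using h k_y by (simp_all add: h2_def algebra_simps)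
  moreover then have "h1 y1 = 1" "h1 y2 = 0" using h by (simp_all add: h1_def)
  ultimately show ?thesis unfolding biorthogonal_def by blast
qed

text \<open>The determinant of the compression of A to span {e1, e2} along the kernels of g1, g2.\<close>

definition compression_det ::
    "('a::complex_banach \<Rightarrow> 'a) \<Rightarrow> ('a \<Rightarrow> complex) \<Rightarrow> ('a \<Rightarrow> complex) \<Rightarrow> 'a \<Rightarrow> 'a \<Rightarrow> complex"
  where "compression_det A g1 g2 e1 e2 = g1 (A e1) * g2 (A e2) - g1 (A e2) * g2 (A e1)"

lemma cindependent_if_compression_det:
  assumes "bounded_clinear_functional g1" "bounded_clinear_functional g2"
    and "compression_det A g1 g2 e1 e2 \<noteq> 0"
  shows "cindependent (A e1) (A e2)"
  unfolding cindependent_def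
proof (intro allI impI)
  fix a b assume "lincomb2 a b (A e1) (A e2) = 0"
  then have "a * g1 (A e1) + b * g1 (A e2) = 0" "a * g2 (A e1) + b * g2 (A e2) = 0"
    using assms(1,2) by (metis bounded_clinear_functional_lincomb2 bounded_clinear_functional_zero)+
  then have "a * compression_det A g1 g2 e1 e2 = 0" "b * compression_det A g1 g2 e1 e2 = 0"
    unfolding compression_det_def by algebra+
  then show "a = 0 \<and> b = 0" using assms(3) by simp
qed

lemma clinear_add: "clinear f \<Longrightarrow> f (x + y) = f x + f y"
  unfolding clinear_def by blast

lemma clinear_scaleC: "clinear f \<Longrightarrow> f (scaleC c x) = scaleC c (f x)"
  unfolding clinear_def by blast

lemma clinear_zero: "clinear f \<Longrightarrow> f 0 = 0"
  unfolding clinear_def by (metis add_cancel_right_right add_0)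

lemma clinear_diff: "clinear f \<Longrightarrow> f (x - y) = f x - f y"
  by (metis add_diff_cancel clinear_add diff_add_cancel)

lemma clinear_lincomb2: "clinear f \<Longrightarrow> f (lincomb2 a b u v) = lincomb2 a b (f u) (f v)"
  by (simp add: lincomb2_def clinear_add clinear_scaleC)

lemma clinear_lincomb3:
  "clinear f \<Longrightarrow> f (lincomb3 a b c u v w) = lincomb3 a b c (f u) (f v) (f w)"
  by (simp add: lincomb3_def clinear_add clinear_scaleC)

lemma bounded_clinear_clinear: "bounded_clinear f \<Longrightarrow> clinear f"
  unfolding bounded_clinear_def by blast

lemma bounded_clinear_ident: "bounded_clinear (\<lambda>x::'a::complex_banach. x)"
  unfolding bounded_clinear_def clinear_def by (auto intro: exI[of _ 1])

lemma bounded_clinear_compose: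
  assumes "bounded_clinear f" "bounded_clinear g"
  shows "bounded_clinear (\<lambda>x. f (g x))"
proof -
  obtain K1 where K1: "\<forall>x. norm (f x) \<le> norm x * K1"
    using assms(1) unfolding bounded_clinear_def by blast
  obtain K2 where K2: "\<forall>x. norm (g x) \<le> norm x * K2"
    using assms(2) unfolding bounded_clinear_def by blast
  have "norm (f (g x)) \<le> norm x * (K2 * max K1 0)" for x
  proof -
    have "norm (f (g x)) \<le> norm (g x) * max K1 0"
      using K1 by (meson max.cobounded1 mult_left_mono norm_ge_zero order_trans)
    also have "\<dots> \<le> (norm x * K2) * max K1 0" using K2 by (simp add: mult_right_mono)
    finally show ?thesis by (simp add: mult.assoc)
  qed
  moreover have "clinear (\<lambda>x. f (g x))"
    using assms unfolding bounded_clinear_def clinear_def by auto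
  ultimately show ?thesis unfolding bounded_clinear_def by blast
qed

lemma bounded_clinear_comp:
  "bounded_clinear f \<Longrightarrow> bounded_clinear g \<Longrightarrow> bounded_clinear (f \<circ> g)"
  using bounded_clinear_compose[of f g] by (simp add: comp_def)

lemma bounded_clinear_add:
  assumes "bounded_clinear f" "bounded_clinear g"
  shows "bounded_clinear (\<lambda>x. f x + g x)"
proof -
  obtain K1 where K1: "\<forall>x. norm (f x) \<le> norm x * K1"
    using assms(1) unfolding bounded_clinear_def by blast
  obtain K2 where K2: "\<forall>x. norm (g x) \<le> norm x * K2"
    using assms(2) unfolding bounded_clinear_def by blast
  have "norm (f x + g x) \<le> norm x * (K1 + K2)" for x
    using norm_triangle_ineq[of "f x" "g x"] K1 K2 by (smt (verit) distrib_left)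
  moreover have "clinear (\<lambda>x. f x + g x)"
    using assms unfolding bounded_clinear_def clinear_def
    by (auto simp: scaleC_add_right algebra_simps)
  ultimately show ?thesis unfolding bounded_clinear_def by blast
qed

lemma bounded_clinear_scaleC:
  assumes "bounded_clinear f"
  shows "bounded_clinear (\<lambda>x. scaleC c (f x))"
proof -
  obtain K where K: "\<forall>x. norm (f x) \<le> norm x * K"
    using assms unfolding bounded_clinear_def by blast
  have "norm (scaleC c (f x)) \<le> norm x * (cmod c * K)" for x
  proof -
    have "cmod c * norm (f x) \<le> cmod c * (norm x * K)" using K by (simp add: mult_left_mono)
    then show ?thesis by (simp add: norm_scaleC mult.left_commute)
  qed
  moreover have "clinear (\<lambda>x. scaleC c (f x))"
    using assms unfolding bounded_clinear_def clinear_def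
    by (auto simp: scaleC_add_right scaleC_scaleC mult.commute)
  ultimately show ?thesis unfolding bounded_clinear_def by blast
qed

lemma bounded_clinear_funpow:
  fixes f :: "'a::complex_banach \<Rightarrow> 'a"
  assumes "bounded_clinear f"
  shows "bounded_clinear (f ^^ n)"
proof (induction n)
  case 0
  then show ?case using bounded_clinear_ident by (simp add: id_def)
next
  case (Suc n)
  then show ?case using bounded_clinear_compose[OF assms] by (simp add: comp_def)
qed

lemma bounded_clinear_rank_one:
  assumes "bounded_clinear_functional g"
  shows "bounded_clinear (\<lambda>x. scaleC (g x) e)"
proof -
  obtain K where K: "\<forall>x. cmod (g x) \<le> K * norm x"
    using assms unfolding bounded_clinear_functional_def by blast
  have "norm (scaleC (g x) e) \<le> norm x * (K * norm e)" for x
  proof -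
    have "cmod (g x) * norm e \<le> (K * norm x) * norm e" using K by (simp add: mult_right_mono)
    then show ?thesis by (simp add: norm_scaleC mult_ac)
  qed
  moreover have "clinear (\<lambda>x. scaleC (g x) e)"
    using assms unfolding bounded_clinear_functional_def clinear_def
    by (auto simp: scaleC_add_left scaleC_scaleC)
  ultimately show ?thesis unfolding bounded_clinear_def by blast
qed

section \<open>Spectra of operators satisfying a polynomial identity\<close>

lemma not_in_op_spectrumI:
  assumes "bounded_clinear S"
    and "\<And>y. T (S y) - scaleC z (S y) = y" and "\<And>y. S (T y - scaleC z y) = y"
  shows "z \<notin> op_spectrum T"
proof -
  have "S \<circ> (\<lambda>x. T x - scaleC z x) = id" "(\<lambda>x. T x - scaleC z x) \<circ> S = id"
    using assms by (auto simp: fun_eq_iff)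
  then show ?thesis using assms(1) unfolding op_spectrum_def invertible_op_def by blast
qed

lemma eigenvalue_in_op_spectrum:
  assumes "v \<noteq> 0" "T v = scaleC z v" "clinear T"
  shows "z \<in> op_spectrum T"
  unfolding op_spectrum_def
proof (intro CollectI notI)
  assume "invertible_op (\<lambda>x. T x - scaleC z x)"
  then obtain S where "S \<circ> (\<lambda>x. T x - scaleC z x) = id" unfolding invertible_op_def by blast
  then have "S (T v - scaleC z v) = v" "S (T 0 - scaleC z 0) = 0" by (metis comp_apply id_apply)+
  then show False using assms clinear_zero[OF assms(3)] by simp
qed

lemma zero_in_op_spectrum:
  assumes "range T \<noteq> UNIV"
  shows "0 \<in> op_spectrum T"
  unfolding op_spectrum_def
proof (intro CollectI notI)
  assume "invertible_op (\<lambda>x. T x - scaleC 0 x)"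
  then obtain S where "(\<lambda>x. T x - scaleC 0 x) \<circ> S = id" unfolding invertible_op_def by blast
  then have "T (S y) = y" for y by (metis comp_apply id_apply scaleC_zero_left diff_zero)
  then show False using assms by (metis surj_def)
qed

lemma spectral_radius_eqI:
  assumes "\<forall>z\<in>op_spectrum T. cmod z \<le> r" "z0 \<in> op_spectrum T" "cmod z0 = r"
  shows "spectral_radius T = r"
  unfolding spectral_radius_def using assms by (intro cSup_eq_maximum) auto

text \<open>If T(T y) = l T y, the inverse of T - z is -(1/z) - T / (z (z - l)) for z \<notin> {0, l}.\<close>

lemma op_spectrum_subset_if_quadratic:
  assumes T: "bounded_clinear T" and quadratic: "\<And>y. T (T y) = scaleC l (T y)"
  shows "op_spectrum T \<subseteq> {0, l}"
proof
  fix z assume z: "z \<in> op_spectrum T"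
  have lin: "clinear T" using T bounded_clinear_clinear by blast
  have T_lincomb: "T (lincomb2 c d y (T y)) = lincomb2 0 (c + d * l) y (T y)" for c d y
    unfolding clinear_lincomb2[OF lin] quadratic
    by (simp add: lincomb2_def scaleC_add_left scaleC_scaleC)
  show "z \<in> {0, l}"
  proof (rule ccontr)
    assume "z \<notin> {0, l}"
    then have z0: "z \<noteq> 0" and zl: "z - l \<noteq> 0" by auto
    define a where "a = - 1 / z"
    define b where "b = - 1 / (z * (z - l))"
    define S where "S y = lincomb2 a b y (T y)" for y
    have "bounded_clinear S" unfolding S_def lincomb2_def
      by (intro bounded_clinear_add bounded_clinear_scaleC bounded_clinear_ident T)
    moreover have "T (S y) - scaleC z (S y) = y" for y
    proof -
      have "T (S y) - scaleC z (S y) = lincomb2 (0 - z * a) (a + b * l - z * b) y (T y)"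
        unfolding S_def T_lincomb lincomb2_diff_scaleC ..
      also have "0 - z * a = 1" using z0 by (simp add: a_def)
      also have "a + b * l - z * b = 0" using z0 zl by (simp add: a_def b_def field_simps)
      finally show ?thesis by simp
    qed
    moreover have "S (T y - scaleC z y) = y" for y
    proof -
      have "T y - scaleC z y = lincomb2 (- z) 1 y (T y)"
        by (simp add: lincomb2_def scaleC_minus_left)
      then have "S (T y - scaleC z y)
                 = lincomb2 a b (lincomb2 (- z) 1 y (T y)) (lincomb2 0 (-z + l) y (T y))"
        unfolding S_def using T_lincomb[of "-z" 1 y] by simp
      also have "\<dots> = lincomb2 (a * (-z) + b * 0) (a * 1 + b * (-z + l)) y (T y)"
        by (rule lincomb2_lincomb2)
      also have "a * (-z) + b * 0 = 1" using z0 by (simp add: a_def)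
      also have "a * 1 + b * (-z + l) = 0" using z0 zl by (simp add: a_def b_def field_simps)
      finally show ?thesis by simp
    qed
    ultimately have "z \<notin> op_spectrum T" by (rule not_in_op_spectrumI)
    then show False using z by blast
  qed
qed

lemma peripheral_spectrum_singleton_if_quadratic:
  assumes T: "bounded_clinear T" and not_surj: "range T \<noteq> UNIV"
    and quadratic: "\<And>y. T (T y) = scaleC l (T y)"
  shows "\<exists>z. peripheral_spectrum T = {z}"
proof -
  have spectrum: "op_spectrum T \<subseteq> {0, l}"
    by (rule op_spectrum_subset_if_quadratic[OF T quadratic])
  have zero: "0 \<in> op_spectrum T" using zero_in_op_spectrum[OF not_surj] .
  show ?thesis
  proof (cases "l \<in> op_spectrum T")
    case True
    then have S: "op_spectrum T = {0, l}" using spectrum zero by blast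
    have "spectral_radius T = cmod l"
      by (rule spectral_radius_eqI[OF _ True]) (auto simp: S)
    then have "peripheral_spectrum T = {z \<in> {0,l}. cmod z = cmod l}"
      unfolding peripheral_spectrum_def S by simp
    also have "\<dots> = {l}" by (cases "l = 0") auto
    finally show ?thesis by blast
  next
    case False
    then have S: "op_spectrum T = {0}" using spectrum zero by blast
    have "spectral_radius T = 0"
      by (rule spectral_radius_eqI[OF _ zero]) (auto simp: S)
    then have "peripheral_spectrum T = {0}" unfolding peripheral_spectrum_def S by auto
    then show ?thesis by blast
  qed
qed

text \<open>If T(T(T x)) = m^2 T x, the inverse of T - z for z \<notin> {0, m, -m} is a combination of
  the identity, T and T^2.\<close>

lemma op_spectrum_subset_if_cubic:
  assumes T: "bounded_clinear T" and cubic: "\<And>x. T (T (T x)) = scaleC (m*m) (T x)"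
  shows "op_spectrum T \<subseteq> {0, m, -m}"
proof
  fix z assume z: "z \<in> op_spectrum T"
  have lin: "clinear T" using T bounded_clinear_clinear by blast
  have T_lincomb: "T (lincomb3 p q r y (T y) (T (T y)))
                   = lincomb3 0 (p + r*(m*m)) q y (T y) (T (T y))" for p q r y
    unfolding clinear_lincomb3[OF lin] cubic
    by (simp add: lincomb3_def scaleC_add_left scaleC_scaleC add_ac)
  show "z \<in> {0, m, -m}"
  proof (rule ccontr)
    assume "z \<notin> {0, m, -m}"
    then have z0: "z \<noteq> 0" and zm: "m*m - z*z \<noteq> 0"
      by (auto simp: mult.commute square_eq_iff [symmetric] power2_eq_square)
    define a where "a = - 1 / z"
    define c where "c = 1 / (z * (m*m - z*z))"
    define b where "b = z * c"
    define S where "S y = lincomb3 a b c y (T y) (T (T y))" for y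
    have "bounded_clinear S" unfolding S_def lincomb3_def
      by (intro bounded_clinear_add bounded_clinear_scaleC bounded_clinear_ident T
          bounded_clinear_compose[OF T T])
    moreover have "T (S y) - scaleC z (S y) = y" for y
    proof -
      have "T (S y) - scaleC z (S y)
            = lincomb3 (0 - z * a) (a + c*(m*m) - z * b) (b - z*c) y (T y) (T (T y))"
        unfolding S_def T_lincomb lincomb3_diff_scaleC ..
      also have "0 - z * a = 1" using z0 by (simp add: a_def)
      also have "a + c*(m*m) - z * b = 0"
        using z0 zm by (simp add: a_def b_def c_def field_simps)
      also have "b - z*c = 0" by (simp add: b_def)
      finally show ?thesis by simp
    qed
    moreover have "S (T y - scaleC z y) = y" for y
    proof -
      have "T y - scaleC z y = lincomb3 (- z) 1 0 y (T y) (T (T y))"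
        by (simp add: lincomb3_def scaleC_minus_left)
      moreover have "T (lincomb3 (- z) 1 0 y (T y) (T (T y)))
                     = lincomb3 0 (-z) 1 y (T y) (T (T y))"
        using T_lincomb[of "-z" 1 0 y] by simp
      moreover have "T (lincomb3 0 (-z) 1 y (T y) (T (T y)))
                     = lincomb3 0 (m*m) (-z) y (T y) (T (T y))"
        using T_lincomb[of 0 "-z" 1 y] by simp
      ultimately have "S (T y - scaleC z y)
          = lincomb3 a b c (lincomb3 (- z) 1 0 y (T y) (T (T y)))
              (lincomb3 0 (-z) 1 y (T y) (T (T y))) (lincomb3 0 (m*m) (-z) y (T y) (T (T y)))"
        unfolding S_def by simp
      also have "\<dots> = lincomb3 (a*(-z) + b*0 + c*0) (a*1 + b*(-z) + c*(m*m))
                        (a*0 + b*1 + c*(-z)) y (T y) (T (T y))"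
        by (rule lincomb3_lincomb3)
      also have "a*(-z) + b*0 + c*0 = 1" using z0 by (simp add: a_def)
      also have "a*1 + b*(-z) + c*(m*m) = 0"
        using z0 zm by (simp add: a_def b_def c_def field_simps)
      also have "a*0 + b*1 + c*(-z) = 0" by (simp add: b_def)
      finally show ?thesis by simp
    qed
    ultimately have "z \<notin> op_spectrum T" by (rule not_in_op_spectrumI)
    then show False using z by blast
  qed
qed

lemma peripheral_spectrum_not_singleton_if_cubic:
  assumes T: "bounded_clinear T" and m0: "m \<noteq> 0"
    and cubic: "\<And>x. T (T (T x)) = scaleC (m*m) (T x)"
    and v: "v \<noteq> 0" "T v = scaleC m v" and w: "w \<noteq> 0" "T w = scaleC (-m) w"
  shows "\<not> (\<exists>z. peripheral_spectrum T = {z})"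
proof -
  have lin: "clinear T" using T bounded_clinear_clinear by blast
  have spectrum: "op_spectrum T \<subseteq> {0, m, -m}"
    by (rule op_spectrum_subset_if_cubic[OF T cubic])
  have m: "m \<in> op_spectrum T" by (rule eigenvalue_in_op_spectrum[OF v lin])
  have minus_m: "-m \<in> op_spectrum T" by (rule eigenvalue_in_op_spectrum[OF w lin])
  have "spectral_radius T = cmod m"
    by (rule spectral_radius_eqI[OF _ m]) (use spectrum in auto)
  then have "m \<in> peripheral_spectrum T" "-m \<in> peripheral_spectrum T"
    unfolding peripheral_spectrum_def using m minus_m by auto
  moreover have "m \<noteq> -m" using m0 by simp
  ultimately show ?thesis by auto
qed

text \<open>On the invariant plane spanned by h1, h2 the matrix N of T has trace 0, so N^2 = m^2 I with
  m^2 = -det N \<noteq> 0; eigenvectors for m and -m are of the form T h + k h with k = m or k = -m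
  and h = h1 or h = h2.\<close>

lemma peripheral_spectrum_not_singleton_traceless:
  assumes T: "bounded_clinear T" and indep: "cindependent h1 h2"
    and range: "\<And>x. \<exists>c d. T x = lincomb2 c d h1 h2"
    and T1: "T h1 = lincomb2 n11 n21 h1 h2" and T2: "T h2 = lincomb2 n12 n22 h1 h2"
    and trace: "n11 + n22 = 0" and det: "n11*n22 - n12*n21 \<noteq> 0"
  shows "\<not> (\<exists>z. peripheral_spectrum T = {z})"
proof -
  have lin: "clinear T" using T bounded_clinear_clinear by blast
  define m where "m = csqrt (n11*n11 + n12*n21)"
  have mm: "m*m = n11*n11 + n12*n21" unfolding m_def by (metis power2_csqrt power2_eq_square)
  have n22: "n22 = - n11" using trace by (simp add: eq_neg_iff_add_eq_0 add.commute)
  have "n11*n22 - n12*n21 = -(m*m)" using mm n22 by (simp add: algebra_simps)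
  then have m0: "m \<noteq> 0" using det by auto
  have T_lincomb: "T (lincomb2 c d h1 h2) = lincomb2 (c*n11 + d*n12) (c*n21 + d*n22) h1 h2"
    for c d
    unfolding clinear_lincomb2[OF lin] T1 T2 lincomb2_lincomb2 ..
  have TT: "T (T (lincomb2 c d h1 h2)) = scaleC (m*m) (lincomb2 c d h1 h2)" for c d
    unfolding T_lincomb scaleC_lincomb2 using mm n22 by (simp add: algebra_simps)
  have cubic: "T (T (T x)) = scaleC (m*m) (T x)" for x
    using range[of x] TT by auto
  have eigen: "T (T y + scaleC k y) = scaleC k (T y + scaleC k y)"
    if "T (T y) = scaleC (k*k) y" for y k
    using that by (simp add: clinear_add[OF lin] clinear_scaleC[OF lin] scaleC_add_right
        scaleC_scaleC add.commute)
  have TT1: "T (T h1) = scaleC (k*k) h1" and TT2: "T (T h2) = scaleC (k*k) h2"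
    if "k*k = m*m" for k
    using TT[of 1 0] TT[of 0 1] that by (simp_all add: lincomb2_def)
  have E1: "T h1 + scaleC k h1 = lincomb2 (n11 + k) n21 h1 h2" for k
    unfolding T1 lincomb2_def by (simp add: scaleC_add_left add_ac)
  have E2: "T h2 + scaleC k h2 = lincomb2 n12 (n22 + k) h1 h2" for k
    unfolding T2 lincomb2_def by (simp add: scaleC_add_left add_ac)
  have eigenvector: "\<exists>v. v \<noteq> 0 \<and> T v = scaleC k v" if "k*k = m*m" for k
  proof (cases "T h1 + scaleC k h1 = 0")
    case True
    then have "n11 + k = 0" using indep E1 unfolding cindependent_def by metis
    moreover have "k \<noteq> 0" using that m0 by auto
    ultimately have "n22 + k \<noteq> 0" using n22 by auto
    then have "T h2 + scaleC k h2 \<noteq> 0" using indep E2 unfolding cindependent_def by metis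
    then show ?thesis using eigen[OF TT2[OF that]] by blast
  next
    case False
    then show ?thesis using eigen[OF TT1[OF that]] by blast
  qed
  obtain v w where "v \<noteq> 0" "T v = scaleC m v" "w \<noteq> 0" "T w = scaleC (-m) w"
    using eigenvector[of m] eigenvector[of "-m"] by auto
  then show ?thesis using peripheral_spectrum_not_singleton_if_cubic[OF T m0 cubic] by blast
qed

lemma peripheral_spectrum_not_singleton_scaled_matrix:
  assumes T: "bounded_clinear T" and indep: "cindependent h1 h2"
    and range: "\<And>x. \<exists>c d. T x = lincomb2 c d h1 h2"
    and T1: "T h1 = lincomb2 (p1 * q1 * G11) (p2 * q1 * G21) h1 h2"
    and T2: "T h2 = lincomb2 (p1 * q2 * G12) (p2 * q2 * G22) h1 h2"
    and trace: "p1 * q1 * G11 + p2 * q2 * G22 = 0"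
    and nonzero: "p1 * p2 * q1 * q2 \<noteq> 0" and det: "G11 * G22 - G12 * G21 \<noteq> 0"
  shows "\<not> (\<exists>z. peripheral_spectrum T = {z})"
proof (rule peripheral_spectrum_not_singleton_traceless[OF T indep range T1 T2 trace])
  have "p1 * q1 * G11 * (p2 * q2 * G22) - p1 * q2 * G12 * (p2 * q1 * G21)
        = (p1 * p2 * q1 * q2) * (G11 * G22 - G12 * G21)"
    by (simp add: algebra_simps)
  then show "p1 * q1 * G11 * (p2 * q2 * G22) - p1 * q2 * G12 * (p2 * q1 * G21) \<noteq> 0"
    using nonzero det by simp
qed

lemma scaleC_in_cspan: "scaleC c u \<in> cspan {u}"
  unfolding cspan_def by (rule CollectI, rule exI[of _ "{u}"], rule exI[of _ "\<lambda>_. c"]) simp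

lemma cspan_singleton_obtain:
  assumes "x \<in> cspan {u}"
  obtains c where "x = scaleC c u"
proof -
  obtain F c where F: "finite F" "F \<subseteq> {u}" "x = (\<Sum>v\<in>F. scaleC (c v) v)"
    using assms unfolding cspan_def by blast
  then consider "F = {}" | "F = {u}" by blast
  then show ?thesis
  proof cases
    case 1
    then show ?thesis using F that[of 0] by simp
  next
    case 2
    then show ?thesis using F that[of "c u"] by simp
  qed
qed

lemma lincomb2_in_cspan:
  assumes "u \<noteq> v"
  shows "lincomb2 a b u v \<in> cspan {u, v}"
  unfolding cspan_def
proof (intro CollectI exI[of _ "{u,v}"] exI[of _ "\<lambda>x. if x = u then a else b"] conjI)
  show "lincomb2 a b u v = (\<Sum>x\<in>{u, v}. scaleC (if x = u then a else b) x)"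
    using assms by (simp add: lincomb2_def)
qed auto

lemma rank_le_0_imp_zero: "rank_le T 0 \<Longrightarrow> T = (\<lambda>x. 0)"
proof -
  assume "rank_le T 0"
  then have "range T \<subseteq> cspan {}" unfolding rank_le_def by auto
  moreover have "cspan {} = {0::'a}" unfolding cspan_def by auto
  ultimately show ?thesis by auto
qed

lemma rank_le_1_obtain:
  assumes "rank_le T 1"
  obtains u where "\<And>x. \<exists>c. T x = scaleC c u"
proof -
  obtain F where F: "finite F" "card F \<le> 1" "range T \<subseteq> cspan F"
    using assms unfolding rank_le_def by blast
  obtain u where "F \<subseteq> {u}"
  proof (cases "F = {}")
    case False
    then obtain u where "u \<in> F" by blast
    then have "F = {u}" using F card_le_Suc0_iff_eq[of F] by auto
    then show ?thesis using that by blast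
  qed (use that in blast)
  then have "cspan F \<subseteq> cspan {u}" unfolding cspan_def by blast
  then have "T x \<in> cspan {u}" for x using F(3) by blast
  then have "\<exists>c. T x = scaleC c u" for x by (meson cspan_singleton_obtain)
  then show ?thesis by (rule that)
qed
lemma not_rank_one_obtain_cindependent_values:
  assumes "A \<noteq> (\<lambda>x. 0)" "\<not> rank_one A"
  obtains x1 x2 where "cindependent (A x1) (A x2)"
proof -
  have not_le_1: "\<not> rank_le A 1" using assms rank_le_0_imp_zero unfolding rank_one_def by blast
  obtain x1 where x1: "A x1 \<noteq> 0" using assms(1) by auto
  obtain x2 where x2: "A x2 \<notin> cspan {A x1}"
  proof (rule ccontr)
    assume "\<not> thesis"
    then have "range A \<subseteq> cspan {A x1}" using that by auto
    then have "rank_le A 1" unfolding rank_le_def by (intro exI[of _ "{A x1}"]) simp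
    then show False using not_le_1 by blast
  qed
  have "cindependent (A x1) (A x2)" unfolding cindependent_def
  proof (intro allI impI)
    fix a b assume eq: "lincomb2 a b (A x1) (A x2) = 0"
    have b0: "b = 0"
    proof (rule ccontr)
      assume b: "b \<noteq> 0"
      have "scaleC b (A x2) = - scaleC a (A x1)" using eq unfolding lincomb2_def
        by (simp add: eq_neg_iff_add_eq_0 add.commute)
      then have "scaleC (1/b) (scaleC b (A x2)) = scaleC (1/b) (- scaleC a (A x1))" by simp
      then have "A x2 = scaleC (- (a/b)) (A x1)" using b
        by (simp add: scaleC_scaleC scaleC_minus_right scaleC_minus_left)
      then show False using x2 scaleC_in_cspan by metis
    qed
    then have "scaleC a (A x1) = 0" using eq by (simp add: lincomb2_def)
    then show "a = 0 \<and> b = 0" using x1 b0 scaleC_eq_0_iff by blast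
  qed
  then show ?thesis using that by blast
qed

lemma rank_one_peripheral_spectrum_singleton:
  fixes A :: "'a::complex_banach \<Rightarrow> 'a"
  assumes dim: "cdim_ge2 TYPE('a)" and A: "bounded_clinear A" and rank: "rank_one A"
    and B: "bounded_clinear B"
  shows "\<exists>z. peripheral_spectrum ((B ^^ r) \<circ> A \<circ> (B ^^ s)) = {z}"
proof -
  obtain u where u: "\<And>x. \<exists>c. A x = scaleC c u"
    using rank rank_le_1_obtain unfolding rank_one_def by blast
  define T where "T = (B ^^ r) \<circ> A \<circ> (B ^^ s)"
  define v where "v = (B ^^ r) u"
  have T: "bounded_clinear T"
    unfolding T_def by (intro bounded_clinear_comp bounded_clinear_funpow B A)
  have range: "\<exists>c. T x = scaleC c v" for x
  proof -
    obtain c where "A ((B ^^ s) x) = scaleC c u" using u by blast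
    then have "T x = scaleC c v" unfolding T_def v_def
      using clinear_scaleC[OF bounded_clinear_clinear[OF bounded_clinear_funpow[OF B]]] by simp
    then show ?thesis by blast
  qed
  obtain l where l: "T v = scaleC l v" using range by blast
  have "T (T y) = scaleC l (T y)" for y
  proof -
    obtain c where c: "T y = scaleC c v" using range by blast
    show ?thesis unfolding c clinear_scaleC[OF bounded_clinear_clinear[OF T]] l
      by (simp add: scaleC_scaleC mult.commute)
  qed
  moreover have "range T \<noteq> UNIV"
  proof
    assume "range T = UNIV"
    then have "UNIV \<subseteq> cspan {v}" using range scaleC_in_cspan by (metis rangeE subsetI)
    moreover have "finite {v} \<and> card {v} \<le> 1" by simp
    ultimately show False using dim unfolding cdim_ge2_def by blast
  qed
  ultimately show ?thesis
    using peripheral_spectrum_singleton_if_quadratic[OF T] unfolding T_def by blast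
qed

section \<open>Operators of rank at least two\<close>

text \<open>Entrywise, K = I - L H and the perturbed matrix is L + K P with P = [[p, r], [q, t]].\<close>

lemma exists_perturbation_det_nonzero:
  fixes L11 L12 L21 L22 H11 H12 H21 H22 K11 K12 K21 K22 :: complex
  assumes K11: "K11 = 1 - H11 * L11 - H21 * L12" and K12: "K12 = 0 - H12 * L11 - H22 * L12"
    and K21: "K21 = 0 - H11 * L21 - H21 * L22" and K22: "K22 = 1 - H12 * L21 - H22 * L22"
  shows "\<exists>p q r t. (L11 + p*K11 + q*K12) * (L22 + r*K21 + t*K22)
                 - (L12 + r*K11 + t*K12) * (L21 + p*K21 + q*K22) \<noteq> 0"
proof (cases "L11 * L22 - L12 * L21 = 0")
  case False
  then show ?thesis by (intro exI[of _ 0]) simp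
next
  case det: True
  consider "L22 \<noteq> 0" | "L11 \<noteq> 0" | "L12 \<noteq> 0" | "L21 \<noteq> 0" | "L11 = 0 \<and> L12 = 0 \<and> L21 = 0 \<and> L22 = 0"
    by blast
  then show ?thesis
  proof cases
    case 1
    have "(L11 + 1*K11 + 0*K12) * (L22 + 0*K21 + 0*K22)
          - (L12 + 0*K11 + 0*K12) * (L21 + 1*K21 + 0*K22) = L22"
      using det unfolding K11 K12 K21 K22 by algebra
    then show ?thesis using 1 by metis
  next
    case 2
    have "(L11 + 0*K11 + 0*K12) * (L22 + 0*K21 + 1*K22)
          - (L12 + 0*K11 + 1*K12) * (L21 + 0*K21 + 0*K22) = L11"
      using det unfolding K11 K12 K21 K22 by algebra
    then show ?thesis using 2 by metis
  next
    case 3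
    have "(L11 + 0*K11 + 1*K12) * (L22 + 0*K21 + 0*K22)
          - (L12 + 0*K11 + 0*K12) * (L21 + 0*K21 + 1*K22) = - L12"
      using det unfolding K11 K12 K21 K22 by algebra
    then show ?thesis using 3 by (metis neg_equal_0_iff_equal)
  next
    case 4
    have "(L11 + 0*K11 + 0*K12) * (L22 + 1*K21 + 0*K22)
          - (L12 + 1*K11 + 0*K12) * (L21 + 0*K21 + 0*K22) = - L21"
      using det unfolding K11 K12 K21 K22 by algebra
    then show ?thesis using 4 by (metis neg_equal_0_iff_equal)
  next
    case 5
    have "(L11 + 1*K11 + 0*K12) * (L22 + 0*K21 + 1*K22)
          - (L12 + 0*K11 + 1*K12) * (L21 + 1*K21 + 0*K22) = 1"
      using 5 unfolding K11 K12 K21 K22 by simp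
    then show ?thesis by (metis one_neq_zero)
  qed
qed

text \<open>The vectors u_j = x_j - h1(x_j) A x1 - h2(x_j) A x2 lie in the common kernel of h1, h2, so
  e_j = A x_j + (combination of u1, u2) keeps the functionals biorthogonal, and the compression
  of A becomes L + K P as in the previous lemma.\<close>

lemma exists_nonsingular_compression:
  assumes A: "clinear A" and bi: "biorthogonal h1 h2 (A x1) (A x2)"
  shows "\<exists>e1 e2. biorthogonal h1 h2 e1 e2 \<and> compression_det A h1 h2 e1 e2 \<noteq> 0"
proof -
  have h1: "bounded_clinear_functional h1" and h2: "bounded_clinear_functional h2"
    and hy: "h1 (A x1) = 1" "h1 (A x2) = 0" "h2 (A x1) = 0" "h2 (A x2) = 1"
    using bi unfolding biorthogonal_def by blast+
  define y1 where "y1 = A x1"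
  define y2 where "y2 = A x2"
  define u1 where "u1 = x1 - scaleC (h1 x1) y1 - scaleC (h2 x1) y2"
  define u2 where "u2 = x2 - scaleC (h1 x2) y1 - scaleC (h2 x2) y2"
  note lin = bounded_clinear_functional_add[OF h1] bounded_clinear_functional_add[OF h2]
    bounded_clinear_functional_diff[OF h1] bounded_clinear_functional_diff[OF h2]
    bounded_clinear_functional_scaleC[OF h1] bounded_clinear_functional_scaleC[OF h2]
    clinear_add[OF A] clinear_diff[OF A] clinear_scaleC[OF A]
  have hu: "h1 u1 = 0" "h2 u1 = 0" "h1 u2 = 0" "h2 u2 = 0"
    unfolding u1_def u2_def y1_def y2_def using hy by (simp_all add: lin)
  define L11 where "L11 = h1 (A y1)"
  define L12 where "L12 = h1 (A y2)"
  define L21 where "L21 = h2 (A y1)"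
  define L22 where "L22 = h2 (A y2)"
  define K11 where "K11 = 1 - h1 x1 * L11 - h2 x1 * L12"
  define K12 where "K12 = 0 - h1 x2 * L11 - h2 x2 * L12"
  define K21 where "K21 = 0 - h1 x1 * L21 - h2 x1 * L22"
  define K22 where "K22 = 1 - h1 x2 * L21 - h2 x2 * L22"
  have hAu: "h1 (A u1) = K11" "h1 (A u2) = K12" "h2 (A u1) = K21" "h2 (A u2) = K22"
    unfolding u1_def u2_def K11_def K12_def K21_def K22_def L11_def L12_def L21_def L22_def
    using hy by (simp_all add: lin y1_def y2_def)
  obtain p q r t where det: "(L11 + p*K11 + q*K12) * (L22 + r*K21 + t*K22)
                 - (L12 + r*K11 + t*K12) * (L21 + p*K21 + q*K22) \<noteq> 0"
    using exists_perturbation_det_nonzero[OF K11_def K12_def K21_def K22_def] by blast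
  define e1 where "e1 = y1 + scaleC p u1 + scaleC q u2"
  define e2 where "e2 = y2 + scaleC r u1 + scaleC t u2"
  have "biorthogonal h1 h2 e1 e2"
    unfolding biorthogonal_def e1_def e2_def using h1 h2 hy hu by (simp add: lin y1_def y2_def)
  moreover have "h1 (A e1) = L11 + p*K11 + q*K12" "h2 (A e1) = L21 + p*K21 + q*K22"
    "h1 (A e2) = L12 + r*K11 + t*K12" "h2 (A e2) = L22 + r*K21 + t*K22"
    unfolding e1_def e2_def using hAu by (simp_all add: lin L11_def L12_def L21_def L22_def)
  ultimately show ?thesis using det unfolding compression_det_def by metis
qed

lemma exists_shear_diagonal_zero_iff:
  fixes a b c d :: complex
  assumes "a*d - b*c \<noteq> 0"
  shows "\<exists>k. a + k*b = 0 \<longleftrightarrow> d - k*b = 0"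
proof (cases "b = 0")
  case True
  then show ?thesis using assms by (intro exI[of _ 0]) auto
next
  case False
  have "a + (d - a)/(2*b) * b = d - (d - a)/(2*b) * b" using False by (simp add: field_simps)
  then show ?thesis by metis
qed

text \<open>Shearing e1 \<mapsto> e1 + k e2, g2 \<mapsto> g2 - k g1 keeps biorthogonality and the determinant,
  and moves the diagonal of the compression to (a + k b, d - k b).\<close>

lemma exists_balanced_compression:
  assumes A: "clinear A" and bi: "biorthogonal g1 g2 e1 e2"
    and det: "compression_det A g1 g2 e1 e2 \<noteq> 0"
  shows "\<exists>e1' g2'. biorthogonal g1 g2' e1' e2 \<and> compression_det A g1 g2' e1' e2 \<noteq> 0 \<and>
           (g1 (A e1') = 0 \<longleftrightarrow> g2' (A e2) = 0)"
proof -
  have g1: "bounded_clinear_functional g1" and g2: "bounded_clinear_functional g2"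
    and bo: "g1 e1 = 1" "g2 e1 = 0" "g1 e2 = 0" "g2 e2 = 1"
    using bi unfolding biorthogonal_def by blast+
  define a where "a = g1 (A e1)"
  define b where "b = g1 (A e2)"
  define c where "c = g2 (A e1)"
  define d where "d = g2 (A e2)"
  have det_abcd: "a*d - b*c \<noteq> 0"
    using det unfolding compression_det_def a_def b_def c_def d_def .
  obtain k where k: "a + k*b = 0 \<longleftrightarrow> d - k*b = 0"
    using exists_shear_diagonal_zero_iff[OF det_abcd] by blast
  define e1' where "e1' = e1 + scaleC k e2"
  define g2' where "g2' x = g2 x - k * g1 x" for x
  note lin = bounded_clinear_functional_add[OF g1] bounded_clinear_functional_add[OF g2]
    bounded_clinear_functional_scaleC[OF g1] bounded_clinear_functional_scaleC[OF g2]
    clinear_add[OF A] clinear_scaleC[OF A]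
  have "bounded_clinear_functional g2'"
    unfolding g2'_def by (rule bounded_clinear_functional_diff_scaled[OF g2 g1])
  then have "biorthogonal g1 g2' e1' e2"
    unfolding biorthogonal_def e1'_def g2'_def using g1 bo by (simp add: lin)
  moreover have G: "g1 (A e1') = a + k*b" "g2' (A e2) = d - k*b" "g1 (A e2) = b"
    "g2' (A e1') = c + k*d - k*(a + k*b)"
    unfolding e1'_def g2'_def a_def b_def c_def d_def by (simp_all add: lin algebra_simps)
  moreover have "compression_det A g1 g2' e1' e2 = a*d - b*c"
    unfolding compression_det_def G by (simp add: algebra_simps)
  ultimately show ?thesis using det_abcd k by metis
qed

lemma exists_complex_root:
  assumes "n \<ge> 1"
  shows "\<exists>z::complex. z ^ n = w"
proof (cases "w = 0")
  case True
  then show ?thesis using assms by (intro exI[of _ 0]) (simp add: power_0_left)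
next
  case False
  have "exp (Ln w / of_nat n) ^ n = exp (of_nat n * (Ln w / of_nat n))"
    by (rule exp_of_nat_mult[symmetric])
  also have "\<dots> = w" using assms False by simp
  finally show ?thesis by blast
qed

lemma exists_nonzero_roots_trace_zero:
  fixes G11 G22 :: complex
  assumes n: "n \<ge> 1" and diagonal: "G11 = 0 \<longleftrightarrow> G22 = 0"
  shows "\<exists>\<alpha> \<beta>. \<alpha> \<noteq> 0 \<and> \<beta> \<noteq> 0 \<and> \<alpha> ^ n * G11 + \<beta> ^ n * G22 = 0"
proof -
  obtain a b where ab: "a \<noteq> 0" "b \<noteq> 0" "a * G11 + b * G22 = 0"
  proof (cases "G11 = 0")
    case True
    then show ?thesis using diagonal that[of 1 1] by simp
  next
    case False
    then show ?thesis using diagonal that[of G22 "- G11"] by (simp add: mult.commute)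
  qed
  obtain \<alpha> \<beta> where "\<alpha> ^ n = a" "\<beta> ^ n = b"
    using exists_complex_root[OF n] by metis
  then show ?thesis using ab n by (intro exI[of _ \<alpha>] exI[of _ \<beta>]) auto
qed

definition diagonal_rank_two ::
    "complex \<Rightarrow> complex \<Rightarrow> ('a::complex_banach \<Rightarrow> complex) \<Rightarrow> ('a \<Rightarrow> complex) \<Rightarrow> 'a \<Rightarrow> 'a
     \<Rightarrow> 'a \<Rightarrow> 'a" where
  "diagonal_rank_two \<alpha> \<beta> g1 g2 e1 e2 x = lincomb2 (\<alpha> * g1 x) (\<beta> * g2 x) e1 e2"

lemma diagonal_rank_two_in_standard_operator_algebra:
  assumes std: "standard_operator_algebra \<A>" and bi: "biorthogonal g1 g2 e1 e2"
  shows "diagonal_rank_two \<alpha> \<beta> g1 g2 e1 e2 \<in> \<A>" "rank_le (diagonal_rank_two \<alpha> \<beta> g1 g2 e1 e2) 2"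
proof -
  let ?B = "diagonal_rank_two \<alpha> \<beta> g1 g2 e1 e2"
  have "?B = (\<lambda>x. scaleC (\<alpha> * g1 x) e1 + scaleC (\<beta> * g2 x) e2)"
    by (simp add: fun_eq_iff diagonal_rank_two_def lincomb2_def)
  then have bounded: "bounded_clinear ?B"
    using bi unfolding biorthogonal_def
    by (metis bounded_clinear_add bounded_clinear_rank_one bounded_clinear_functional_scaled)
  have "e1 \<noteq> e2" using bi unfolding biorthogonal_def by auto
  then show rank: "rank_le ?B 2"
    unfolding rank_le_def diagonal_rank_two_def using lincomb2_in_cspan
    by (intro exI[of _ "{e1, e2}"]) auto
  show "?B \<in> \<A>"
    using std bounded rank unfolding standard_operator_algebra_def finite_rank_def by blast
qed

lemma funpow_diagonal_rank_two:
  assumes bi: "biorthogonal g1 g2 e1 e2"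
  shows "(diagonal_rank_two \<alpha> \<beta> g1 g2 e1 e2 ^^ Suc k) x
         = lincomb2 (\<alpha> ^ Suc k * g1 x) (\<beta> ^ Suc k * g2 x) e1 e2"
    and "(diagonal_rank_two \<alpha> \<beta> g1 g2 e1 e2 ^^ k) e1 = lincomb2 (\<alpha> ^ k) 0 e1 e2"
    and "(diagonal_rank_two \<alpha> \<beta> g1 g2 e1 e2 ^^ k) e2 = lincomb2 0 (\<beta> ^ k) e1 e2"
proof -
  have g1: "bounded_clinear_functional g1" and g2: "bounded_clinear_functional g2"
    and bo: "g1 e1 = 1" "g2 e1 = 0" "g1 e2 = 0" "g2 e2 = 1"
    using bi unfolding biorthogonal_def by blast+
  let ?B = "diagonal_rank_two \<alpha> \<beta> g1 g2 e1 e2"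
  have B_lincomb: "?B (lincomb2 a b e1 e2) = lincomb2 (\<alpha> * a) (\<beta> * b) e1 e2" for a b
    unfolding diagonal_rank_two_def using bo
    by (simp add: bounded_clinear_functional_lincomb2[OF g1] bounded_clinear_functional_lincomb2[OF g2])
  show "(?B ^^ Suc k) x = lincomb2 (\<alpha> ^ Suc k * g1 x) (\<beta> ^ Suc k * g2 x) e1 e2"
  proof (induction k)
    case 0
    then show ?case by (simp add: diagonal_rank_two_def)
  next
    case (Suc k)
    then show ?case by (simp add: B_lincomb mult.assoc)
  qed
  show "(?B ^^ k) e1 = lincomb2 (\<alpha> ^ k) 0 e1 e2" "(?B ^^ k) e2 = lincomb2 0 (\<beta> ^ k) e1 e2"
    by (induction k) (simp_all add: B_lincomb, simp_all add: lincomb2_def)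
qed

lemma exists_rank_two_peripheral_spectrum_not_singleton:
  assumes std: "standard_operator_algebra \<A>" and A: "bounded_clinear A" and rs: "r + s \<ge> 1"
    and bi: "biorthogonal g1 g2 e1 e2" and det: "compression_det A g1 g2 e1 e2 \<noteq> 0"
    and diagonal: "g1 (A e1) = 0 \<longleftrightarrow> g2 (A e2) = 0"
  shows "\<exists>B\<in>\<A>. rank_le B 2 \<and> \<not> (\<exists>z. peripheral_spectrum ((B ^^ r) \<circ> A \<circ> (B ^^ s)) = {z})"
proof -
  have g1: "bounded_clinear_functional g1" and g2: "bounded_clinear_functional g2"
    using bi unfolding biorthogonal_def by blast+
  have linA: "clinear A" using A bounded_clinear_clinear by blast
  define G11 where "G11 = g1 (A e1)"
  define G12 where "G12 = g1 (A e2)"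
  define G21 where "G21 = g2 (A e1)"
  define G22 where "G22 = g2 (A e2)"
  have det_G: "G11 * G22 - G12 * G21 \<noteq> 0"
    using det unfolding compression_det_def G11_def G12_def G21_def G22_def .
  obtain \<alpha> \<beta> where nonzero: "\<alpha> \<noteq> 0" "\<beta> \<noteq> 0"
    and trace_sum: "\<alpha> ^ (r + s) * G11 + \<beta> ^ (r + s) * G22 = 0"
    using exists_nonzero_roots_trace_zero[OF rs] diagonal unfolding G11_def G22_def by blast
  define B where "B = diagonal_rank_two \<alpha> \<beta> g1 g2 e1 e2"
  have B_in: "B \<in> \<A>" "rank_le B 2"
    unfolding B_def using diagonal_rank_two_in_standard_operator_algebra[OF std bi] by auto
  have B_pow: "(B ^^ Suc k) x = lincomb2 (\<alpha> ^ Suc k * g1 x) (\<beta> ^ Suc k * g2 x) e1 e2"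
    "(B ^^ k) e1 = lincomb2 (\<alpha> ^ k) 0 e1 e2" "(B ^^ k) e2 = lincomb2 0 (\<beta> ^ k) e1 e2" for k x
    unfolding B_def using funpow_diagonal_rank_two[OF bi] by auto
  define T where "T = (B ^^ r) \<circ> A \<circ> (B ^^ s)"
  have T: "bounded_clinear T"
    using std B_in(1) unfolding T_def standard_operator_algebra_def
    by (metis bounded_clinear_comp bounded_clinear_funpow A)
  have trace: "\<alpha> ^ r * \<alpha> ^ s * G11 + \<beta> ^ r * \<beta> ^ s * G22 = 0"
    using trace_sum by (simp add: power_add)
  note g_lincomb = bounded_clinear_functional_lincomb2[OF g1] bounded_clinear_functional_lincomb2[OF g2]
  have "\<not> (\<exists>z. peripheral_spectrum T = {z})"
    \<comment> \<open>the invariant plane containing the range is span {A e1, A e2} if r = 0,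
      and span {e1, e2} otherwise\<close>
  proof (cases r)
    case 0
    then obtain s' where s: "s = Suc s'" using rs by (cases s) auto
    have T_x: "T x = lincomb2 (\<alpha> ^ s * g1 x) (\<beta> ^ s * g2 x) (A e1) (A e2)" for x
    proof -
      have "T x = A ((B ^^ Suc s') x)" unfolding T_def 0 s by simp
      also have "\<dots> = lincomb2 (\<alpha> ^ s * g1 x) (\<beta> ^ s * g2 x) (A e1) (A e2)"
        unfolding B_pow(1) clinear_lincomb2[OF linA] s ..
      finally show ?thesis .
    qed
    have "cindependent (A e1) (A e2)" using cindependent_if_compression_det[OF g1 g2 det] .
    moreover have "\<exists>c d. T x = lincomb2 c d (A e1) (A e2)" for x using T_x by blast
    moreover have "T (A e1) = lincomb2 (\<alpha> ^ s * 1 * G11) (\<beta> ^ s * 1 * G21) (A e1) (A e2)"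
      "T (A e2) = lincomb2 (\<alpha> ^ s * 1 * G12) (\<beta> ^ s * 1 * G22) (A e1) (A e2)"
      unfolding T_x G11_def G12_def G21_def G22_def by simp_all
    moreover have "\<alpha> ^ s * 1 * G11 + \<beta> ^ s * 1 * G22 = 0" using trace 0 by simp
    moreover have "\<alpha> ^ s * \<beta> ^ s * 1 * 1 \<noteq> 0" using nonzero by simp
    ultimately show ?thesis using peripheral_spectrum_not_singleton_scaled_matrix[OF T] det_G
      by blast
  next
    case (Suc r')
    have T_x: "T x = lincomb2 (\<alpha> ^ r * g1 (A ((B ^^ s) x))) (\<beta> ^ r * g2 (A ((B ^^ s) x))) e1 e2"
      for x unfolding T_def Suc comp_apply B_pow(1) ..
    have "compression_det (\<lambda>x. x) g1 g2 e1 e2 = 1"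
      using bi unfolding biorthogonal_def compression_det_def by simp
    then have "cindependent e1 e2"
      using cindependent_if_compression_det[OF g1 g2, of "\<lambda>x. x"] by simp
    moreover have "\<exists>c d. T x = lincomb2 c d e1 e2" for x using T_x by blast
    moreover have "T e1 = lincomb2 (\<alpha> ^ r * \<alpha> ^ s * G11) (\<beta> ^ r * \<alpha> ^ s * G21) e1 e2"
      "T e2 = lincomb2 (\<alpha> ^ r * \<beta> ^ s * G12) (\<beta> ^ r * \<beta> ^ s * G22) e1 e2"
      unfolding T_x B_pow(2,3) clinear_lincomb2[OF linA] g_lincomb
        G11_def G12_def G21_def G22_def by (simp_all add: mult_ac)
    moreover have "\<alpha> ^ r * \<beta> ^ r * \<alpha> ^ s * \<beta> ^ s \<noteq> 0" using nonzero by simp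
    ultimately show ?thesis
      using peripheral_spectrum_not_singleton_scaled_matrix[OF T] trace det_G by blast
  qed
  then show ?thesis using B_in unfolding T_def by blast
qed

lemma not_rank_one_exists_rank_two_witness:
  assumes std: "standard_operator_algebra \<A>" and A: "bounded_clinear A" and rs: "r + s \<ge> 1"
    and nonzero: "A \<noteq> (\<lambda>x. 0)" and not_rank_one: "\<not> rank_one A"
  shows "\<exists>B\<in>\<A>. rank_le B 2 \<and> \<not> (\<exists>z. peripheral_spectrum ((B ^^ r) \<circ> A \<circ> (B ^^ s)) = {z})"
proof -
  have linA: "clinear A" using A bounded_clinear_clinear by blast
  obtain x1 x2 where "cindependent (A x1) (A x2)"
    using not_rank_one_obtain_cindependent_values[OF nonzero not_rank_one] .
  then obtain h1 h2 where "biorthogonal h1 h2 (A x1) (A x2)"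
    using biorthogonal_exists by blast
  then obtain e1 e2 where "biorthogonal h1 h2 e1 e2" "compression_det A h1 h2 e1 e2 \<noteq> 0"
    using exists_nonsingular_compression[OF linA] by blast
  then obtain e1' h2' where "biorthogonal h1 h2' e1' e2" "compression_det A h1 h2' e1' e2 \<noteq> 0"
      "h1 (A e1') = 0 \<longleftrightarrow> h2' (A e2) = 0"
    using exists_balanced_compression[OF linA] by blast
  then show ?thesis using exists_rank_two_peripheral_spectrum_not_singleton[OF std A rs] by blast
qed

theorem lemma2p3:
  fixes \<A> :: "('a::complex_banach \<Rightarrow> 'a) set"
    and A :: "'a \<Rightarrow> 'a" and r s :: nat
  assumes "cdim_ge2 TYPE('a)"
    and "standard_operator_algebra \<A>"
    and "r + s \<ge> 1"
    and "A \<in> \<A>" and "A \<noteq> (\<lambda>x. 0)"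
  shows "(rank_one A \<longleftrightarrow>
            (\<forall>B\<in>\<A>. \<exists>z. peripheral_spectrum ((B ^^ r) \<circ> A \<circ> (B ^^ s)) = {z}))
       \<and> (rank_one A \<longleftrightarrow>
            (\<forall>B\<in>\<A>. rank_le B 2 \<longrightarrow>
               (\<exists>z. peripheral_spectrum ((B ^^ r) \<circ> A \<circ> (B ^^ s)) = {z})))"
proof -
  have bounded: "\<And>T. T \<in> \<A> \<Longrightarrow> bounded_clinear T"
    using assms(2) unfolding standard_operator_algebra_def by blast
  have "\<exists>z. peripheral_spectrum ((B ^^ r) \<circ> A \<circ> (B ^^ s)) = {z}"
    if "rank_one A" "B \<in> \<A>" for B
    using rank_one_peripheral_spectrum_singleton[OF assms(1) bounded[OF assms(4)]] that bounded
    by blast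
  moreover have "\<exists>B\<in>\<A>. rank_le B 2 \<and>
                   \<not> (\<exists>z. peripheral_spectrum ((B ^^ r) \<circ> A \<circ> (B ^^ s)) = {z})"
    if "\<not> rank_one A"
    using not_rank_one_exists_rank_two_witness[OF assms(2) bounded[OF assms(4)] assms(3,5) that] .
  ultimately show ?thesis by blast
qed
end
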